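(* Let $k$ be a nonnegative integer such that some fair set $S \in \mathcal{C}$ has $|S| = k$. Define $\tilde{\mathcal{C}}_k = \{S \subseteq V : \text{there exists } S' \in \mathcal{C} \text{ with } |S'| \le k \text{ and } S \subseteq S'\}$. Then $\tilde{\mathcal{C}}_k$ is a matroid, every fair set $S \in \mathcal{C}$ with $|S| = k$ is a base of $\tilde{\mathcal{C}}_k$, and conversely every base of $\tilde{\mathcal{C}}_k$ is a fair set (of size $k$).
   Context: $V$ is a finite ground set partitioned into disjoint color groups $V_1,\dots,V_C$, with integer bounds $0 \le \ell_c \le u_c$ for each $c$. The fair sets are $\mathcal{C} = \{S \subseteq V : \ell_c \le |S \cap V_c| \le u_c\ \forall c \in [C]\}$. A base of a matroid is an inclusion-maximal independent set. *)

theory Defs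
  imports Main
begin

definition matroid :: "'a set \<Rightarrow> 'a set set \<Rightarrow> bool" where
  "matroid E \<I> \<longleftrightarrow>
     finite E \<and> \<I> \<subseteq> Pow E \<and> {} \<in> \<I> \<and>
     (\<forall>A B. A \<in> \<I> \<and> B \<subseteq> A \<longrightarrow> B \<in> \<I>) \<and>
     (\<forall>A B. A \<in> \<I> \<and> B \<in> \<I> \<and> card A < card B \<longrightarrow> (\<exists>x\<in>B - A. insert x A \<in> \<I>))"

definition base :: "'a set set \<Rightarrow> 'a set \<Rightarrow> bool" where
  "base \<I> B \<longleftrightarrow> B \<in> \<I> \<and> (\<forall>A\<in>\<I>. B \<subseteq> A \<longrightarrow> A = B)"

text \<open>Color groups V c for c < C, lower/upper bounds l c, u c.\<close>
definition fair_sets :: "'a set \<Rightarrow> nat \<Rightarrow> (nat \<Rightarrow> 'a set) \<Rightarrow> (nat \<Rightarrow> nat) \<Rightarrow> (nat \<Rightarrow> nat) \<Rightarrow> 'a set set" where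
  "fair_sets V C Vc l u = {S. S \<subseteq> V \<and> (\<forall>c<C. l c \<le> card (S \<inter> Vc c) \<and> card (S \<inter> Vc c) \<le> u c)}"

definition trunc_fair :: "'a set \<Rightarrow> nat \<Rightarrow> (nat \<Rightarrow> 'a set) \<Rightarrow> (nat \<Rightarrow> nat) \<Rightarrow> (nat \<Rightarrow> nat) \<Rightarrow> nat \<Rightarrow> 'a set set" where
  "trunc_fair V C Vc l u k = {S. S \<subseteq> V \<and> (\<exists>S'\<in>fair_sets V C Vc l u. card S' \<le> k \<and> S \<subseteq> S')}"

end

theory Submission
  imports Defs
begin

text \<open>
  Once every colour class is large enough for its lower bound, a set lies below some fair set
  of size at most k iff it respects the upper bounds and its padded size
  \<open>\<Sum>\<^sub>c max |S \<inter> V\<^sub>c| \<ell>\<^sub>c\<close> is at most k: pad each deficient class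
  up to its lower bound. If |A| < |B| then B has more elements than A in some class c; if that
  class is still deficient for A, adding an element of B there leaves the padded size
  unchanged, and otherwise a counting argument shows the padded size of A is below k. A base coincides with the fair set above it, and exchanging against a
  fair set of size k shows that it has size k.
\<close>

lemma sum_max_add_indicator_le:
  fixes a l :: "'i \<Rightarrow> nat"
  assumes "finite I" "c \<in> I"
  shows "(\<Sum>d\<in>I. max (a d + (if d = c then 1 else 0)) (l d))
    \<le> (\<Sum>d\<in>I. max (a d) (l d)) + (if a c < l c then 0 else 1)"
proof -
  have "(\<Sum>d\<in>I. max (a d + (if d = c then 1 else 0)) (l d))
      \<le> (\<Sum>d\<in>I. max (a d) (l d) + (if d = c \<and> \<not> a c < l c then 1 else 0))"
    by (rule sum_mono) auto
  also have "\<dots> = (\<Sum>d\<in>I. max (a d) (l d)) + (if a c < l c then 0 else 1)"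
    using assms by (simp add: sum.distrib)
  finally show ?thesis .
qed

lemma exists_index_lt_with_slack:
  fixes a b l :: "'i \<Rightarrow> nat"
  assumes "finite I" "(\<Sum>i\<in>I. a i) < (\<Sum>i\<in>I. b i)" "(\<Sum>i\<in>I. max (b i) (l i)) \<le> k"
  shows "\<exists>i\<in>I. a i < b i \<and> (a i < l i \<or> (\<Sum>i\<in>I. max (a i) (l i)) < k)"
proof (cases "\<exists>i\<in>I. a i < b i \<and> a i < l i")
  case True
  then show ?thesis by blast
next
  case False
  have "(\<Sum>i\<in>I. max (a i) (l i) + b i) \<le> (\<Sum>i\<in>I. max (b i) (l i) + a i)"
    using False by (intro sum_mono) fastforce
  then have "(\<Sum>i\<in>I. max (a i) (l i)) < k"
    using assms by (simp add: sum.distrib)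
  moreover obtain i where "i \<in> I" "a i < b i"
    using assms(2) sum_mono[of I b a] by (meson not_le)
  ultimately show ?thesis by blast
qed

lemma matroid_card_le_base:
  assumes "matroid E \<I>" "base \<I> B" "A \<in> \<I>"
  shows "card A \<le> card B"
proof (rule ccontr)
  assume "\<not> card A \<le> card B"
  then obtain x where "x \<in> A - B" "insert x B \<in> \<I>"
    using assms unfolding matroid_def base_def by (meson not_le)
  then show False
    using assms(2) unfolding base_def by blast
qed

locale colour_partition =
  fixes V :: "'a set" and C :: nat and Vc :: "nat \<Rightarrow> 'a set"
  assumes finite_ground: "finite V"
    and colour_subset: "\<And>c. c < C \<Longrightarrow> Vc c \<subseteq> V"
    and colours_disjoint: "\<And>c d. c < C \<Longrightarrow> d < C \<Longrightarrow> c \<noteq> d \<Longrightarrow> Vc c \<inter> Vc d = {}"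
    and colours_cover: "(\<Union>c<C. Vc c) = V"
begin

lemma finite_colour: "c < C \<Longrightarrow> finite (Vc c)"
  using colour_subset finite_ground finite_subset by blast

lemma card_eq_sum_colour_counts:
  assumes "S \<subseteq> V"
  shows "card S = (\<Sum>c<C. card (S \<inter> Vc c))"
proof -
  have "S = (\<Union>c<C. S \<inter> Vc c)"
    using assms colours_cover by blast
  also have "card \<dots> = (\<Sum>c<C. card (S \<inter> Vc c))"
    using finite_colour colours_disjoint by (intro card_UN_disjoint) auto
  finally show ?thesis .
qed

lemma card_insert_Int_colour:
  assumes "x \<in> Vc c" "x \<notin> A" "c < C" "d < C"
  shows "card (insert x A \<inter> Vc d) = card (A \<inter> Vc d) + (if d = c then 1 else 0)"
proof (cases "d = c")
  case True
  then show ?thesis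
    using assms finite_colour by simp
next
  case False
  then have "x \<notin> Vc d"
    using assms colours_disjoint by blast
  then show ?thesis
    using False by simp
qed

lemma exists_superset_with_colour_counts:
  assumes "S \<subseteq> V" "\<And>c. c < C \<Longrightarrow> card (S \<inter> Vc c) \<le> n c \<and> n c \<le> card (Vc c)"
  obtains S' where "S \<subseteq> S'" "S' \<subseteq> V" "\<And>c. c < C \<Longrightarrow> card (S' \<inter> Vc c) = n c"
proof -
  have "\<forall>c\<in>{..<C}. \<exists>T. S \<inter> Vc c \<subseteq> T \<and> T \<subseteq> Vc c \<and> card T = n c"
    using assms finite_colour by (auto intro: exists_subset_between)
  then obtain T where T: "\<And>c. c < C \<Longrightarrow> S \<inter> Vc c \<subseteq> T c \<and> T c \<subseteq> Vc c \<and> card (T c) = n c"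
    by (metis bchoice lessThan_iff)
  define S' where "S' = (\<Union>c<C. T c)"
  have "S' \<inter> Vc d = T d" if "d < C" for d
    using T that colours_disjoint unfolding S'_def by blast
  moreover have "S \<subseteq> S'"
    using assms(1) T colours_cover unfolding S'_def by blast
  moreover have "S' \<subseteq> V"
    using T colour_subset unfolding S'_def by blast
  ultimately show ?thesis
    using that T by simp
qed

end

locale fair_constraints = colour_partition +
  fixes l u :: "nat \<Rightarrow> nat"
  assumes lower_le_upper: "\<And>c. c < C \<Longrightarrow> l c \<le> u c"
    and fair_sets_nonempty: "fair_sets V C Vc l u \<noteq> {}"
begin

lemma lower_le_card_colour:
  assumes "c < C"
  shows "l c \<le> card (Vc c)"
proof -
  obtain S where "S \<in> fair_sets V C Vc l u"
    using fair_sets_nonempty by blast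
  then have "l c \<le> card (S \<inter> Vc c)"
    using assms unfolding fair_sets_def by blast
  also have "\<dots> \<le> card (Vc c)"
    using assms finite_colour by (simp add: card_mono)
  finally show ?thesis .
qed

lemma fair_in_trunc_fair:
  "S \<in> fair_sets V C Vc l u \<Longrightarrow> card S \<le> k \<Longrightarrow> S \<in> trunc_fair V C Vc l u k"
  unfolding trunc_fair_def fair_sets_def by blast

lemma trunc_fair_iff:
  "S \<in> trunc_fair V C Vc l u k \<longleftrightarrow>
     S \<subseteq> V \<and> (\<forall>c<C. card (S \<inter> Vc c) \<le> u c) \<and> (\<Sum>c<C. max (card (S \<inter> Vc c)) (l c)) \<le> k"
proof
  assume "S \<in> trunc_fair V C Vc l u k"
  then obtain S' where S': "S \<subseteq> V" "S' \<in> fair_sets V C Vc l u" "card S' \<le> k" "S \<subseteq> S'"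
    unfolding trunc_fair_def by blast
  have count_le: "card (S \<inter> Vc c) \<le> card (S' \<inter> Vc c)" if "c < C" for c
    using S'(4) finite_colour[OF that] by (intro card_mono) auto
  have "(\<Sum>c<C. max (card (S \<inter> Vc c)) (l c)) \<le> (\<Sum>c<C. card (S' \<inter> Vc c))"
    using S'(2) count_le unfolding fair_sets_def by (intro sum_mono) auto
  also have "\<dots> = card S'"
    using S'(2) card_eq_sum_colour_counts unfolding fair_sets_def by simp
  finally show "S \<subseteq> V \<and> (\<forall>c<C. card (S \<inter> Vc c) \<le> u c)
      \<and> (\<Sum>c<C. max (card (S \<inter> Vc c)) (l c)) \<le> k"
    using S' count_le unfolding fair_sets_def by (fastforce intro: order_trans)
next
  assume S: "S \<subseteq> V \<and> (\<forall>c<C. card (S \<inter> Vc c) \<le> u c)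
      \<and> (\<Sum>c<C. max (card (S \<inter> Vc c)) (l c)) \<le> k"
  obtain S' where S': "S \<subseteq> S'" "S' \<subseteq> V"
    and counts: "\<And>c. c < C \<Longrightarrow> card (S' \<inter> Vc c) = max (card (S \<inter> Vc c)) (l c)"
    by (rule exists_superset_with_colour_counts[of S "\<lambda>c. max (card (S \<inter> Vc c)) (l c)"])
      (use S lower_le_card_colour finite_colour in \<open>auto simp: card_mono\<close>)
  have "S' \<in> fair_sets V C Vc l u"
    using S'(2) counts S lower_le_upper unfolding fair_sets_def by auto
  moreover have "card S' \<le> k"
    using S'(2) S counts card_eq_sum_colour_counts by simp
  ultimately show "S \<in> trunc_fair V C Vc l u k"
    using S S'(1) unfolding trunc_fair_def by blast
qed

lemma trunc_fair_exchange:
  assumes A: "A \<in> trunc_fair V C Vc l u k" and B: "B \<in> trunc_fair V C Vc l u k"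
    and "card A < card B"
  shows "\<exists>x\<in>B - A. insert x A \<in> trunc_fair V C Vc l u k"
proof -
  define a where "a c = card (A \<inter> Vc c)" for c
  define b where "b c = card (B \<inter> Vc c)" for c
  have "(\<Sum>c<C. a c) < (\<Sum>c<C. b c)" "(\<Sum>c<C. max (b c) (l c)) \<le> k"
    using assms card_eq_sum_colour_counts unfolding a_def b_def trunc_fair_iff by auto
  then obtain c where c: "c < C" "a c < b c" "a c < l c \<or> (\<Sum>c<C. max (a c) (l c)) < k"
    using exists_index_lt_with_slack[of "{..<C}" a b l k] by auto
  then have "\<not> B \<inter> Vc c \<subseteq> A \<inter> Vc c"
    using finite_colour[OF c(1)] unfolding a_def b_def by (meson card_mono finite_Int not_le)
  then obtain x where x: "x \<in> B" "x \<in> Vc c" "x \<notin> A"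
    by blast
  have counts: "card (insert x A \<inter> Vc d) = a d + (if d = c then 1 else 0)" if "d < C" for d
    using card_insert_Int_colour[OF x(2,3) c(1) that] unfolding a_def .
  have A_bounds: "A \<subseteq> V" "\<forall>d<C. a d \<le> u d" "(\<Sum>d<C. max (a d) (l d)) \<le> k"
    using A unfolding a_def trunc_fair_iff by auto
  have "b c \<le> u c" "x \<in> V"
    using B c(1) x(1) unfolding b_def trunc_fair_iff by auto
  then have "\<forall>d<C. card (insert x A \<inter> Vc d) \<le> u d"
    using A_bounds(2) c(2) counts by auto
  moreover have "(\<Sum>d<C. max (card (insert x A \<inter> Vc d)) (l d))
      = (\<Sum>d<C. max (a d + (if d = c then 1 else 0)) (l d))"
    using counts by (intro sum.cong) simp_all
  moreover have "\<dots> \<le> (\<Sum>d<C. max (a d) (l d)) + (if a c < l c then 0 else 1)"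
    using sum_max_add_indicator_le[of "{..<C}" c a l] c(1) by simp
  ultimately have "insert x A \<in> trunc_fair V C Vc l u k"
    using c(3) A_bounds \<open>x \<in> V\<close> unfolding trunc_fair_iff by (auto split: if_splits)
  then show ?thesis
    using x by blast
qed

lemma matroid_trunc_fair:
  assumes "S \<in> fair_sets V C Vc l u" "card S \<le> k"
  shows "matroid V (trunc_fair V C Vc l u k)"
  unfolding matroid_def
proof (intro conjI allI impI)
  show "{} \<in> trunc_fair V C Vc l u k"
    using fair_in_trunc_fair[OF assms] unfolding trunc_fair_def by blast
  show "\<exists>x\<in>B - A. insert x A \<in> trunc_fair V C Vc l u k"
    if "A \<in> trunc_fair V C Vc l u k \<and> B \<in> trunc_fair V C Vc l u k \<and> card A < card B" for A B
    using that trunc_fair_exchange by blast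
qed (use finite_ground in \<open>auto simp: trunc_fair_def\<close>)

lemma base_trunc_fair_if_fair:
  assumes S: "S \<in> fair_sets V C Vc l u" "card S = k"
  shows "base (trunc_fair V C Vc l u k) S"
  unfolding base_def
proof (intro conjI ballI impI)
  show "S \<in> trunc_fair V C Vc l u k"
    using S fair_in_trunc_fair by simp
  fix A
  assume "A \<in> trunc_fair V C Vc l u k" "S \<subseteq> A"
  then obtain S' where S': "S' \<in> fair_sets V C Vc l u" "card S' \<le> k" "S \<subseteq> S'" "A \<subseteq> S'"
    unfolding trunc_fair_def by blast
  then have "finite S'"
    using finite_ground finite_subset unfolding fair_sets_def by blast
  then have "S = S'"
    using S S' by (metis card_subset_eq card_mono antisym)
  then show "A = S"
    using \<open>S \<subseteq> A\<close> S'(4) by blast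
qed

lemma fair_if_base_trunc_fair:
  assumes S: "S \<in> fair_sets V C Vc l u" "card S = k"
    and B: "base (trunc_fair V C Vc l u k) B"
  shows "B \<in> fair_sets V C Vc l u \<and> card B = k"
proof -
  obtain S' where S': "S' \<in> fair_sets V C Vc l u" "card S' \<le> k" "B \<subseteq> S'"
    using B unfolding base_def trunc_fair_def by blast
  have "S' = B"
    using B S' fair_in_trunc_fair unfolding base_def by blast
  moreover have "k \<le> card B"
    using matroid_card_le_base[OF matroid_trunc_fair B] S fair_in_trunc_fair by (metis order_refl)
  ultimately show ?thesis
    using S' by simp
qed

end

theorem lemma4p2:
  fixes V :: "'a set" and C :: nat and Vc :: "nat \<Rightarrow> 'a set" and l u :: "nat \<Rightarrow> nat" and k :: nat
  assumes "finite V"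
    and "\<And>c. c < C \<Longrightarrow> Vc c \<subseteq> V"
    and "\<And>c d. c < C \<Longrightarrow> d < C \<Longrightarrow> c \<noteq> d \<Longrightarrow> Vc c \<inter> Vc d = {}"
    and "(\<Union>c<C. Vc c) = V"
    and "\<And>c. c < C \<Longrightarrow> l c \<le> u c"
    and "\<exists>S\<in>fair_sets V C Vc l u. card S = k"
  shows "matroid V (trunc_fair V C Vc l u k)
    \<and> (\<forall>S\<in>fair_sets V C Vc l u. card S = k \<longrightarrow> base (trunc_fair V C Vc l u k) S)
    \<and> (\<forall>B. base (trunc_fair V C Vc l u k) B \<longrightarrow> B \<in> fair_sets V C Vc l u \<and> card B = k)"
proof -
  obtain S where S: "S \<in> fair_sets V C Vc l u" "card S = k"
    using assms(6) by blast
  interpret fair_constraints V C Vc l u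
    using assms(1-5) S by unfold_locales auto
  show ?thesis
    using matroid_trunc_fair[OF S(1)] S base_trunc_fair_if_fair fair_if_base_trunc_fair by blast
qed

end
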